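(* Let $G$ be a loopless multigraph with $n$ vertices, $m$ edges and maximum degree $\Delta$, and let $q\in\mathbb{N}$ and $\lambda\ge1$. Then $$Z(G,\lambda,q)\le\left(1+q^{-1}(\lambda^\Delta-1)\right)^{\lceil m/\Delta\rceil}q^n.$$ Moreover, if $\Delta$ divides $m$ and $2m/\Delta\le n$, equality holds for $G=H(n,m,\Delta)$.
   Context: For a loopless multigraph $G=(V,E)$ (multiple edges allowed), $Z(G,\lambda,q)=\sum_{\sigma\in[q]^V}\lambda^{\mu(\sigma)}$, where $\mu(\sigma)$ is the number of edges (counted with multiplicity) whose two endpoints receive the same colour under $\sigma$. For positive integers $n,m,\Delta$ with $\Delta\mid m$ and $m\le\Delta n/2$, $H(n,m,\Delta)$ is the multigraph on $n$ vertices obtained by taking $m/\Delta$ pairwise disjoint (independent) edges and replacing each by $\Delta$ parallel edges. *)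

theory Defs
  imports Complex_Main "HOL-Library.Multiset" "HOL-Library.FuncSet"
begin

text \<open>A loopless multigraph is given by a vertex set V and a multiset E of edges,
each edge an (unordered, orientation irrelevant) pair (u,v) with u \<noteq> v in V.\<close>

definition loopless_multigraph :: "'a set \<Rightarrow> ('a \<times> 'a) multiset \<Rightarrow> bool" where
  "loopless_multigraph V E \<longleftrightarrow> finite V \<and> (\<forall>e \<in># E. fst e \<in> V \<and> snd e \<in> V \<and> fst e \<noteq> snd e)"

definition mg_degree :: "('a \<times> 'a) multiset \<Rightarrow> 'a \<Rightarrow> nat" where
  "mg_degree E x = size (filter_mset (\<lambda>e. fst e = x \<or> snd e = x) E)"

definition max_degree :: "'a set \<Rightarrow> ('a \<times> 'a) multiset \<Rightarrow> nat" where
  "max_degree V E = Max (insert 0 (mg_degree E ` V))"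

definition mono_edges :: "('a \<times> 'a) multiset \<Rightarrow> ('a \<Rightarrow> nat) \<Rightarrow> nat" where
  "mono_edges E \<sigma> = size (filter_mset (\<lambda>e. \<sigma> (fst e) = \<sigma> (snd e)) E)"

definition Z :: "'a set \<Rightarrow> ('a \<times> 'a) multiset \<Rightarrow> real \<Rightarrow> nat \<Rightarrow> real" where
  "Z V E lam q = (\<Sum>\<sigma> \<in> (V \<rightarrow>\<^sub>E {..<q}). lam ^ mono_edges E \<sigma>)"

definition H_vertices :: "nat \<Rightarrow> nat set" where
  "H_vertices n = {..<n}"

definition H_edges :: "nat \<Rightarrow> nat \<Rightarrow> (nat \<times> nat) multiset" where
  "H_edges m \<Delta> = mset (concat (map (\<lambda>i. replicate \<Delta> (2*i, 2*i+1)) [0..<m div \<Delta>]))"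

end

theory Submission imports Defs "HOL-Analysis.Analysis" begin

text \<open>Colour the vertices one at a time. When a vertex a with d \<le> \<Delta> incident edges is added,
summing over its q colours multiplies the partition function by at most q - 1 + \<lambda>^d: the
colours of a together make at most d edges monochromatic, and k \<mapsto> \<lambda>^k - 1 is
superadditive. By concavity of y \<mapsto> y^(d/\<Delta>), q - 1 + \<lambda>^d \<le> q (1 + (\<lambda>^\<Delta> - 1)/q)^(d/\<Delta>), and
since every edge is removed exactly once the exponents add up to m/\<Delta>. For H(n,m,\<Delta>) each
bundle of \<Delta> parallel edges contributes exactly the factor q (q - 1 + \<lambda>^\<Delta>).\<close>

lemma sum_PiE_insert:
  assumes "x \<notin> S"
  shows "(\<Sum>\<sigma>\<in>insert x S \<rightarrow>\<^sub>E A. h \<sigma>) = (\<Sum>\<tau>\<in>S \<rightarrow>\<^sub>E A. \<Sum>c\<in>A. h (\<tau>(x := c)))"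
proof -
  have "(\<Sum>\<sigma>\<in>insert x S \<rightarrow>\<^sub>E A. h \<sigma>) = (\<Sum>(c, \<tau>)\<in>A \<times> (S \<rightarrow>\<^sub>E A). h (\<tau>(x := c)))"
    unfolding PiE_insert_eq using inj_combinator[OF assms]
    by (subst sum.reindex) (auto simp: case_prod_unfold)
  also have "\<dots> = (\<Sum>c\<in>A. \<Sum>\<tau>\<in>S \<rightarrow>\<^sub>E A. h (\<tau>(x := c)))"
    by (simp add: sum.cartesian_product)
  finally show ?thesis
    by (simp add: sum.swap[of _ A])
qed

lemma Z_insert:
  "x \<notin> S \<Longrightarrow> Z (insert x S) E lam q = (\<Sum>\<tau>\<in>S \<rightarrow>\<^sub>E {..<q}. \<Sum>c<q. lam ^ mono_edges E (\<tau>(x := c)))"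
  unfolding Z_def by (rule sum_PiE_insert)

lemma mono_edges_plus: "mono_edges (A + B) \<sigma> = mono_edges A \<sigma> + mono_edges B \<sigma>"
  by (simp add: mono_edges_def)

lemma mono_edges_fun_upd_not_incident:
  "\<forall>e\<in>#E. fst e \<noteq> x \<and> snd e \<noteq> x \<Longrightarrow> mono_edges E (\<tau>(x := c)) = mono_edges E \<tau>"
  unfolding mono_edges_def by (intro arg_cong[where f=size] filter_mset_cong) auto

lemma mono_edges_replicate:
  "mono_edges (replicate_mset D (a, b)) \<sigma> = (if \<sigma> a = \<sigma> b then D else 0)"
  unfolding mono_edges_def by (induction D) auto

lemma Z_nonneg: "lam \<ge> 0 \<Longrightarrow> 0 \<le> Z V E lam q"
  unfolding Z_def by (intro sum_nonneg) simp

lemma Z_no_edges: "finite V \<Longrightarrow> Z V {#} lam q = real q ^ card V"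
  by (simp add: Z_def mono_edges_def card_PiE)

lemma Z_insert_isolated:
  assumes "x \<notin> S" "\<forall>e\<in>#E. fst e \<noteq> x \<and> snd e \<noteq> x"
  shows "Z (insert x S) E lam q = q * Z S E lam q"
  using assms by (simp add: Z_insert mono_edges_fun_upd_not_incident) (simp add: Z_def sum_distrib_left)

lemma sum_power_minus_one_le:
  fixes lam :: real
  assumes "finite C" "lam \<ge> 1"
  shows "(\<Sum>c\<in>C. lam ^ f c - 1) \<le> lam ^ (\<Sum>c\<in>C. f c) - 1"
  using assms(1)
proof (induction C rule: finite_induct)
  case (insert c C)
  have "0 \<le> (lam ^ f c - 1) * (lam ^ (\<Sum>c\<in>C. f c) - 1)"
    using assms(2) by (intro mult_nonneg_nonneg) (simp_all add: one_le_power)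
  then show ?case using insert by (simp add: power_add algebra_simps)
qed simp

text \<open>Each edge at a is monochromatic for exactly one colour of a, namely that of its other end.\<close>

lemma sum_mono_edges_recolour_le:
  assumes "finite A" "\<forall>e\<in>#E. (fst e = a \<or> snd e = a) \<and> fst e \<noteq> snd e"
  shows "(\<Sum>c\<in>A. mono_edges E (\<tau>(a := c))) \<le> size E"
  using assms(2)
proof (induction E)
  case empty
  then show ?case by (simp add: mono_edges_def)
next
  case (add e E)
  define v where "v = (if fst e = a then \<tau> (snd e) else \<tau> (fst e))"
  have "mono_edges (add_mset e E) (\<tau>(a := c)) = mono_edges E (\<tau>(a := c)) + (if c = v then 1 else 0)" for c
    using add.prems by (auto simp: mono_edges_def v_def)
  then have "(\<Sum>c\<in>A. mono_edges (add_mset e E) (\<tau>(a := c)))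
      = (\<Sum>c\<in>A. mono_edges E (\<tau>(a := c))) + (\<Sum>c\<in>A. if c = v then 1 else 0)"
    by (simp add: sum.distrib)
  moreover have "(\<Sum>c\<in>A. if c = v then 1 else (0::nat)) \<le> 1"
    using assms(1) by (simp add: sum.delta)
  ultimately show ?case using add by (simp del: fun_upd_apply)
qed

lemma sum_recolour_le:
  fixes lam :: real
  assumes "lam \<ge> 1" "\<forall>e\<in>#E. (fst e = a \<or> snd e = a) \<and> fst e \<noteq> snd e"
  shows "(\<Sum>c<q. lam ^ mono_edges E (\<tau>(a := c))) \<le> real q - 1 + lam ^ size E"
proof -
  have "(\<Sum>c<q. lam ^ mono_edges E (\<tau>(a := c)) - 1) \<le> lam ^ (\<Sum>c<q. mono_edges E (\<tau>(a := c))) - 1"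
    using assms by (intro sum_power_minus_one_le) auto
  also have "\<dots> \<le> lam ^ size E - 1"
    using assms sum_mono_edges_recolour_le[of "{..<q}" E a \<tau>] by (simp add: power_increasing)
  finally show ?thesis by (simp add: sum_subtractf)
qed

lemma Z_insert_vertex_le:
  fixes lam :: real
  assumes "a \<notin> V" "lam \<ge> 1"
    and "\<forall>e\<in>#E\<^sub>a. (fst e = a \<or> snd e = a) \<and> fst e \<noteq> snd e"
    and "\<forall>e\<in>#E. fst e \<noteq> a \<and> snd e \<noteq> a"
  shows "Z (insert a V) (E\<^sub>a + E) lam q \<le> (real q - 1 + lam ^ size E\<^sub>a) * Z V E lam q"
proof -
  have "Z (insert a V) (E\<^sub>a + E) lam q
      = (\<Sum>\<tau>\<in>V \<rightarrow>\<^sub>E {..<q}. lam ^ mono_edges E \<tau> * (\<Sum>c<q. lam ^ mono_edges E\<^sub>a (\<tau>(a := c))))"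
    using assms by (simp add: Z_insert mono_edges_plus mono_edges_fun_upd_not_incident
        power_add sum_distrib_left mult.commute)
  also have "\<dots> \<le> (\<Sum>\<tau>\<in>V \<rightarrow>\<^sub>E {..<q}. lam ^ mono_edges E \<tau> * (real q - 1 + lam ^ size E\<^sub>a))"
    using sum_recolour_le[OF assms(2,3)] assms(2) by (intro sum_mono mult_left_mono) auto
  also have "\<dots> = (real q - 1 + lam ^ size E\<^sub>a) * Z V E lam q"
    by (simp add: Z_def sum_distrib_left mult_ac)
  finally show ?thesis .
qed

lemma powr_concave_two_point:
  fixes u v w t :: real
  assumes "u > 0" "v > 0" "0 \<le> w" "w \<le> 1" "0 \<le> t" "t \<le> 1"
  shows "(1 - w) * u powr t + w * v powr t \<le> ((1 - w) * u + w * v) powr t"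
proof -
  define Y where "Y = (1 - w) * u + w * v"
  have "Y > 0"
    unfolding Y_def using assms by (cases "w = 0") (auto intro: add_nonneg_pos add_pos_nonneg)
  have young: "(s / Y) powr t \<le> t * (s / Y) + (1 - t)" if "s > 0" for s
    using Youngs_inequality_0[of t "1 - t" "s / Y" 1] assms that \<open>Y > 0\<close> by simp
  have "(1 - w) * (u / Y) powr t + w * (v / Y) powr t
      \<le> (1 - w) * (t * (u / Y) + (1 - t)) + w * (t * (v / Y) + (1 - t))"
    using young assms by (intro add_mono mult_left_mono) auto
  also have "\<dots> = t * (((1 - w) * u + w * v) / Y) + (1 - t)"
    using \<open>Y > 0\<close> by (simp add: field_simps)
  also have "\<dots> = 1"
    using \<open>Y > 0\<close> by (simp add: Y_def)
  finally have "((1 - w) * u powr t + w * v powr t) / Y powr t \<le> 1"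
    using \<open>Y > 0\<close> assms by (simp add: powr_divide add_divide_distrib)
  then show ?thesis
    using \<open>Y > 0\<close> by (simp add: Y_def)
qed

lemma vertex_factor_le:
  fixes lam :: real
  assumes "q \<ge> 1" "lam \<ge> 1" "d \<le> D" "D > 0"
  shows "real q - 1 + lam ^ d \<le> real q * (1 + (lam ^ D - 1) / real q) powr (real d / real D)"
proof -
  have "1 - 1 / real q + 1 / real q * (lam ^ D) powr (real d / real D)
      \<le> (1 - 1 / real q + 1 / real q * lam ^ D) powr (real d / real D)"
    using powr_concave_two_point[of 1 "lam ^ D" "1 / real q" "real d / real D"] assms
    by (simp add: order.strict_trans2[OF zero_less_one one_le_power])
  moreover have "(lam ^ D) powr (real d / real D) = lam ^ d"
    using assms by (simp add: powr_realpow[symmetric] powr_powr)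
  moreover have "1 - 1 / real q + 1 / real q * lam ^ D = 1 + (lam ^ D - 1) / real q"
    by (simp add: diff_divide_distrib)
  ultimately have "1 - 1 / real q + 1 / real q * lam ^ d \<le> (1 + (lam ^ D - 1) / real q) powr (real d / real D)"
    by (simp only:)
  then have "real q * (1 - 1 / real q + 1 / real q * lam ^ d) \<le> real q * (1 + (lam ^ D - 1) / real q) powr (real d / real D)"
    by (intro mult_left_mono) auto
  moreover have "real q * (1 - 1 / real q + 1 / real q * lam ^ d) = real q - 1 + lam ^ d"
    using assms by (simp add: field_simps)
  ultimately show ?thesis
    by linarith
qed

lemma mg_degree_filter_mset_le: "mg_degree (filter_mset P E) x \<le> mg_degree E x"
  unfolding mg_degree_def by (intro size_mset_mono) (simp add: multiset_filter_mono multiset_filter_subset)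

lemma loopless_multigraph_delete_vertex:
  "loopless_multigraph (insert a V) E
    \<Longrightarrow> loopless_multigraph V (filter_mset (\<lambda>e. fst e \<noteq> a \<and> snd e \<noteq> a) E)"
  by (auto simp: loopless_multigraph_def)

lemma Z_le_powr:
  fixes lam :: real
  assumes "loopless_multigraph V E" "\<forall>x\<in>V. mg_degree E x \<le> D"
    and "q \<ge> 1" "lam \<ge> 1" "D > 0"
  shows "Z V E lam q \<le> (1 + (lam ^ D - 1) / real q) powr (real (size E) / real D) * real q ^ card V"
proof -
  have "finite V" using assms(1) by (simp add: loopless_multigraph_def)
  then show ?thesis
    using assms(1,2)
  proof (induction V arbitrary: E rule: finite_induct)
    case empty
    then have "E = {#}" by (cases E) (auto simp: loopless_multigraph_def)
    moreover have "0 < 1 + (lam ^ D - 1) / real q"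
      using assms(3,4) by (simp add: add_pos_nonneg one_le_power)
    ultimately show ?case by (simp add: Z_no_edges)
  next
    case (insert a V)
    define B where "B = 1 + (lam ^ D - 1) / real q"
    have "B \<ge> 1" unfolding B_def using assms by (simp add: one_le_power)
    define E\<^sub>a where "E\<^sub>a = filter_mset (\<lambda>e. fst e = a \<or> snd e = a) E"
    define E' where "E' = filter_mset (\<lambda>e. fst e \<noteq> a \<and> snd e \<noteq> a) E"
    have split: "E = E\<^sub>a + E'"
      unfolding E\<^sub>a_def E'_def using multiset_partition[of E "\<lambda>e. fst e = a \<or> snd e = a"] by simp
    have "size E\<^sub>a \<le> D"
      using insert.prems(2) unfolding E\<^sub>a_def mg_degree_def by auto
    have "loopless_multigraph V E'"
      using insert.prems(1) unfolding E'_def by (rule loopless_multigraph_delete_vertex)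
    moreover have "\<forall>x\<in>V. mg_degree E' x \<le> D"
      using insert.prems(2) mg_degree_filter_mset_le[of _ E] unfolding E'_def by (meson insertCI le_trans)
    ultimately have IH: "Z V E' lam q \<le> B powr (real (size E') / real D) * real q ^ card V"
      using insert.IH unfolding B_def by blast
    have "Z (insert a V) E lam q \<le> (real q - 1 + lam ^ size E\<^sub>a) * Z V E' lam q"
      unfolding split using insert.hyps(2) insert.prems(1) assms(4)
      by (intro Z_insert_vertex_le) (auto simp: E\<^sub>a_def E'_def loopless_multigraph_def)
    also have "\<dots> \<le> (real q * B powr (real (size E\<^sub>a) / real D)) * (B powr (real (size E') / real D) * real q ^ card V)"
      using vertex_factor_le[OF assms(3,4) \<open>size E\<^sub>a \<le> D\<close> assms(5)] IH assms(4)
      by (intro mult_mono) (auto simp: B_def Z_nonneg)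
    also have "\<dots> = B powr (real (size E) / real D) * real q ^ card (insert a V)"
      using insert.hyps \<open>B \<ge> 1\<close> unfolding split
      by (simp add: powr_add[symmetric] add_divide_distrib)
    finally show ?case unfolding B_def .
  qed
qed

lemma mg_degree_le_max_degree: "finite V \<Longrightarrow> x \<in> V \<Longrightarrow> mg_degree E x \<le> max_degree V E"
  unfolding max_degree_def by (auto intro: Max_ge)

lemma max_degree_eq_0_imp_no_edges:
  assumes "loopless_multigraph V E" "max_degree V E = 0"
  shows "E = {#}"
proof (rule ccontr)
  assume "E \<noteq> {#}"
  then obtain e where "e \<in># E" by auto
  then have "e \<in># filter_mset (\<lambda>e'. fst e' = fst e \<or> snd e' = fst e) E"
    by simp
  then have "0 < mg_degree E (fst e)"
    unfolding mg_degree_def by (metis empty_iff gr0I set_mset_empty size_eq_0_iff_empty)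
  moreover have "fst e \<in> V" "finite V"
    using assms(1) \<open>e \<in># E\<close> by (auto simp: loopless_multigraph_def)
  ultimately show False
    using mg_degree_le_max_degree[of V "fst e" E] assms(2) by simp
qed

lemma Z_le:
  fixes lam :: real
  assumes "loopless_multigraph V E" "q \<ge> 1" "lam \<ge> 1"
  shows "Z V E lam q \<le> (1 + (lam ^ max_degree V E - 1) / real q)
           ^ nat \<lceil>real (size E) / real (max_degree V E)\<rceil> * real q ^ card V"
proof (cases "max_degree V E = 0")
  case True
  then show ?thesis
    using assms(1) max_degree_eq_0_imp_no_edges[OF assms(1)]
    by (simp add: Z_no_edges loopless_multigraph_def)
next
  case False
  define D where "D = max_degree V E"
  define B where "B = 1 + (lam ^ D - 1) / real q"
  have "B \<ge> 1" unfolding B_def using assms by (simp add: one_le_power)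
  have "finite V" using assms(1) by (simp add: loopless_multigraph_def)
  then have degree_le: "\<forall>x\<in>V. mg_degree E x \<le> D"
    unfolding D_def by (simp add: mg_degree_le_max_degree)
  have "D > 0" using False unfolding D_def by simp
  have "Z V E lam q \<le> B powr (real (size E) / real D) * real q ^ card V"
    unfolding B_def by (rule Z_le_powr[OF assms(1) degree_le assms(2,3) \<open>D > 0\<close>])
  also have "\<dots> \<le> B powr real (nat \<lceil>real (size E) / real D\<rceil>) * real q ^ card V"
    using \<open>B \<ge> 1\<close> by (intro mult_right_mono powr_mono) (auto intro: le_of_int_ceiling)
  also have "\<dots> = B ^ nat \<lceil>real (size E) / real D\<rceil> * real q ^ card V"
    using \<open>B \<ge> 1\<close> by (subst powr_realpow) auto
  finally show ?thesis unfolding B_def D_def .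
qed

definition parallel_matching :: "nat \<Rightarrow> nat \<Rightarrow> (nat \<times> nat) multiset" where
  "parallel_matching D k = mset (concat (map (\<lambda>i. replicate D (2*i, 2*i+1)) [0..<k]))"

lemma H_edges_eq_parallel_matching: "H_edges m D = parallel_matching D (m div D)"
  by (simp add: H_edges_def parallel_matching_def)

lemma parallel_matching_Suc:
  "parallel_matching D (Suc k) = parallel_matching D k + replicate_mset D (2*k, 2*k+1)"
  by (simp add: parallel_matching_def)

lemma parallel_matching_less: "e \<in># parallel_matching D k \<Longrightarrow> fst e < 2*k \<and> snd e < 2*k"
  by (auto simp: parallel_matching_def split: if_splits)

lemma sum_lessThan_if_eq:
  fixes x :: real
  assumes "v < q"
  shows "(\<Sum>c<q. if c = v then x else 1) = real q - 1 + x"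
proof -
  have "(\<Sum>c<q. if c = v then x else 1) = (\<Sum>c<q. (if c = v then x - 1 else 0) + 1)"
    by (intro sum.cong) auto
  then show ?thesis using assms by (simp add: sum.distrib)
qed

lemma Z_insert_parallel_edges:
  fixes lam :: real
  assumes "a \<notin> S" "b \<notin> S" "a \<noteq> b" "\<forall>e\<in>#E. fst e \<noteq> a \<and> snd e \<noteq> a \<and> fst e \<noteq> b \<and> snd e \<noteq> b"
  shows "Z (insert a (insert b S)) (E + replicate_mset D (a, b)) lam q
       = (real q - 1 + lam ^ D) * q * Z S E lam q"
proof -
  have power_if: "lam ^ (if P then D else 0) = (if P then lam ^ D else 1)" for P
    by simp
  have "Z (insert a (insert b S)) (E + replicate_mset D (a, b)) lam q
      = (\<Sum>\<tau>\<in>insert b S \<rightarrow>\<^sub>E {..<q}. \<Sum>c<q. lam ^ mono_edges E \<tau> * (if c = \<tau> b then lam ^ D else 1))"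
    using assms by (simp add: Z_insert mono_edges_plus mono_edges_replicate
        mono_edges_fun_upd_not_incident power_add power_if)
  also have "\<dots> = (\<Sum>\<tau>\<in>insert b S \<rightarrow>\<^sub>E {..<q}. lam ^ mono_edges E \<tau> * (real q - 1 + lam ^ D))"
  proof (intro sum.cong refl)
    fix \<tau> assume "\<tau> \<in> insert b S \<rightarrow>\<^sub>E {..<q}"
    then have "\<tau> b < q" by auto
    then show "(\<Sum>c<q. lam ^ mono_edges E \<tau> * (if c = \<tau> b then lam ^ D else 1))
        = lam ^ mono_edges E \<tau> * (real q - 1 + lam ^ D)"
      by (simp add: sum_distrib_left[symmetric] sum_lessThan_if_eq)
  qed
  also have "\<dots> = (real q - 1 + lam ^ D) * Z (insert b S) E lam q"
    by (simp add: Z_def sum_distrib_left mult_ac)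
  also have "\<dots> = (real q - 1 + lam ^ D) * q * Z S E lam q"
    using assms by (simp add: Z_insert_isolated)
  finally show ?thesis .
qed

lemma Z_parallel_matching:
  "Z {..<2*k} (parallel_matching D k) lam q = ((real q - 1 + lam ^ D) * q) ^ k"
proof (induction k)
  case 0
  then show ?case by (simp add: parallel_matching_def Z_no_edges)
next
  case (Suc k)
  have "{..<2 * Suc k} = insert (2*k) (insert (2*k+1) {..<2*k})" by auto
  moreover have "Z (insert (2*k) (insert (2*k+1) {..<2*k}))
      (parallel_matching D k + replicate_mset D (2*k, 2*k+1)) lam q
      = (real q - 1 + lam ^ D) * q * Z {..<2*k} (parallel_matching D k) lam q"
    using parallel_matching_less[of _ D k] by (intro Z_insert_parallel_edges) force+
  ultimately show ?case
    using Suc by (simp add: parallel_matching_Suc)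
qed

lemma Z_parallel_matching_isolated:
  assumes "2*k \<le> N"
  shows "Z {..<N} (parallel_matching D k) lam q = real q ^ (N - 2*k) * ((real q - 1 + lam ^ D) * q) ^ k"
  using assms
proof (induction N rule: dec_induct)
  case base
  then show ?case by (simp add: Z_parallel_matching)
next
  case (step N)
  have "Z {..<Suc N} (parallel_matching D k) lam q = q * Z {..<N} (parallel_matching D k) lam q"
    unfolding lessThan_Suc using parallel_matching_less step.hyps
    by (intro Z_insert_isolated) force+
  then show ?case
    using step by (simp add: Suc_diff_le)
qed

lemma Z_H:
  fixes lam :: real
  assumes "q \<ge> 1" "0 < D" "D dvd m" "2 * m div D \<le> n"
  shows "Z (H_vertices n) (H_edges m D) lam q = (1 + (lam ^ D - 1) / real q) ^ nat \<lceil>real m / real D\<rceil> * real q ^ n"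
proof -
  obtain k where m: "m = k * D" using assms(3) by (metis dvd_def mult.commute)
  have "2 * k \<le> n" using assms(2,4) unfolding m by simp
  have vertex_pair_factor: "(real q - 1 + lam ^ D) * q = (1 + (lam ^ D - 1) / real q) * real q ^ 2"
    using assms(1) by (simp add: field_simps power2_eq_square)
  have "Z (H_vertices n) (H_edges m D) lam q = real q ^ (n - 2*k) * ((real q - 1 + lam ^ D) * q) ^ k"
    using Z_parallel_matching_isolated[OF \<open>2 * k \<le> n\<close>] assms(2)
    by (simp add: H_vertices_def H_edges_eq_parallel_matching m)
  also have "\<dots> = real q ^ (n - 2*k) * ((1 + (lam ^ D - 1) / real q) * real q ^ 2) ^ k"
    unfolding vertex_pair_factor ..
  also have "\<dots> = (1 + (lam ^ D - 1) / real q) ^ k * (real q ^ (2*k) * real q ^ (n - 2*k))"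
    by (simp add: power_mult_distrib power_mult)
  also have "\<dots> = (1 + (lam ^ D - 1) / real q) ^ k * real q ^ n"
    using \<open>2 * k \<le> n\<close> by (simp flip: power_add)
  moreover have "nat \<lceil>real m / real D\<rceil> = k"
    using assms(2) unfolding m by simp
  ultimately show ?thesis by simp
qed

theorem theorem3p1:
  fixes V :: "'a set" and E :: "('a \<times> 'a) multiset" and q :: nat and lam :: real
  assumes "loopless_multigraph V E" and "q \<ge> 1" and "lam \<ge> 1"
  shows "Z V E lam q \<le>
           (1 + (lam ^ max_degree V E - 1) / real q)
             ^ nat \<lceil>real (size E) / real (max_degree V E)\<rceil> * real q ^ card V
         \<and> (\<forall>n m \<Delta>::nat. 0 < n \<longrightarrow> 0 < m \<longrightarrow> 0 < \<Delta> \<longrightarrow> \<Delta> dvd m \<longrightarrow> 2 * m div \<Delta> \<le> n \<longrightarrow>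
           Z (H_vertices n) (H_edges m \<Delta>) lam q =
           (1 + (lam ^ \<Delta> - 1) / real q) ^ nat \<lceil>real m / real \<Delta>\<rceil> * real q ^ n)"
  using Z_le[OF assms] Z_H[OF assms(2)] by blast

end
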